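(* Let $N$ be finite, $\mathbf P$ stochastic on $N$, $0<\beta<1$, $\mathbf R\in\mathbb R^N$, $S\subseteq N$ and $\nu\in\mathbb{R}$. The stopping rule $\tau_S$ (continue while in $S$, stop upon first entering $S^c$) is optimal for the problem $\max_\tau\{f_i^\tau-\nu g_i^\tau\}$ over all stopping rules $\tau$, simultaneously for every initial state $i\in N$, if and only if $$\max\{\nu_j^S: j\in S^c\}\le\nu\le\min\{\nu_j^S: j\in S\},$$ with the conventions $\max\emptyset=-\infty$, $\min\emptyset=+\infty$.
   Context: $N$ is a finite state set, $\mathbf{P}=(p_{ij})$ stochastic, $\beta\in(0,1)$, $\mathbf R=(R_j)$; $X(t)$ the Markov chain with matrix $\mathbf P$, $\mathsf E_i$ expectation given $X(0)=i$, $S^c=N\setminus S$. Stopping rules are (possibly randomized) stopping times in $\{0,1,\dots\}\cup\{\infty\}$; $f_i^\tau=\mathsf{E}_i[\sum_{t=0}^{\tau-1}R_{X(t)}\beta^t]$, $g_i^\tau=\mathsf{E}_i[\sum_{t=0}^{\tau-1}\beta^t]$. For $S\subseteq N$, $\tau_S=\min\{t\ge0:X(t)\notin S\}$, $f_i^S=f_i^{\tau_S}$, $g_i^S=g_i^{\tau_S}$, $w_i^S=1+\beta\sum_jp_{ij}g_j^S-\beta g_i^S$ (which is positive), $r_i^S=R_i+\beta\sum_jp_{ij}f_j^S-\beta f_i^S$, and the marginal productivity rate is $\nu_i^S=r_i^S/w_i^S$. *)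

theory Defs
  imports "HOL-Analysis.Analysis"
begin

definition stochastic :: "('n::finite \<Rightarrow> 'n \<Rightarrow> real) \<Rightarrow> bool" where
  "stochastic P \<longleftrightarrow> (\<forall>i j. 0 \<le> P i j) \<and> (\<forall>i. (\<Sum>j\<in>UNIV. P i j) = 1)"

text \<open>A (possibly randomized) stopping rule is given behaviourally by
  sigma h = conditional probability of stopping at time t, given the observed
  history h = [X(0),...,X(t)] and that the rule has not stopped before t.
  sigma = 0 everywhere is tau = infinity.\<close>

definition stopping_rule :: "('n list \<Rightarrow> real) \<Rightarrow> bool" where
  "stopping_rule \<sigma> \<longleftrightarrow> (\<forall>h. 0 \<le> \<sigma> h \<and> \<sigma> h \<le> 1)"

definition paths :: "'n \<Rightarrow> nat \<Rightarrow> 'n list set" where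
  "paths i t = {xs. length xs = Suc t \<and> hd xs = i}"

definition path_prob :: "('n \<Rightarrow> 'n \<Rightarrow> real) \<Rightarrow> 'n list \<Rightarrow> real" where
  "path_prob P xs = (\<Prod>s<length xs - 1. P (xs ! s) (xs ! Suc s))"

text \<open>Probability that the rule has not stopped at any time 0..t along history xs
  (so that tau > t).\<close>
definition survive :: "('n list \<Rightarrow> real) \<Rightarrow> 'n list \<Rightarrow> real" where
  "survive \<sigma> xs = (\<Prod>s<length xs. 1 - \<sigma> (take (Suc s) xs))"

text \<open>E_i [ sum_{t<tau} C(X(t)) beta^t ] = sum_t beta^t E_i[C(X(t)) 1{tau > t}].\<close>
definition disc_val :: "('n::finite \<Rightarrow> 'n \<Rightarrow> real) \<Rightarrow> real \<Rightarrow> ('n \<Rightarrow> real)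
    \<Rightarrow> ('n list \<Rightarrow> real) \<Rightarrow> 'n \<Rightarrow> real" where
  "disc_val P \<beta> C \<sigma> i =
     (\<Sum>t. \<beta> ^ t * (\<Sum>xs\<in>paths i t. path_prob P xs * survive \<sigma> xs * C (last xs)))"

definition fval :: "('n::finite \<Rightarrow> 'n \<Rightarrow> real) \<Rightarrow> real \<Rightarrow> ('n \<Rightarrow> real)
    \<Rightarrow> ('n list \<Rightarrow> real) \<Rightarrow> 'n \<Rightarrow> real" where
  "fval P \<beta> R \<sigma> i = disc_val P \<beta> R \<sigma> i"

definition gval :: "('n::finite \<Rightarrow> 'n \<Rightarrow> real) \<Rightarrow> real
    \<Rightarrow> ('n list \<Rightarrow> real) \<Rightarrow> 'n \<Rightarrow> real" where
  "gval P \<beta> \<sigma> i = disc_val P \<beta> (\<lambda>_. 1) \<sigma> i"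

definition tauS :: "'n set \<Rightarrow> 'n list \<Rightarrow> real" where
  "tauS S h = (if last h \<in> S then 0 else 1)"

definition fS where "fS P \<beta> R S i = fval P \<beta> R (tauS S) i"
definition gS where "gS P \<beta> S i = gval P \<beta> (tauS S) i"

definition wS :: "('n::finite \<Rightarrow> 'n \<Rightarrow> real) \<Rightarrow> real \<Rightarrow> 'n set \<Rightarrow> 'n \<Rightarrow> real" where
  "wS P \<beta> S i = 1 + \<beta> * (\<Sum>j\<in>UNIV. P i j * gS P \<beta> S j) - \<beta> * gS P \<beta> S i"

definition rS :: "('n::finite \<Rightarrow> 'n \<Rightarrow> real) \<Rightarrow> real \<Rightarrow> ('n \<Rightarrow> real) \<Rightarrow> 'n set \<Rightarrow> 'n \<Rightarrow> real" where
  "rS P \<beta> R S i = R i + \<beta> * (\<Sum>j\<in>UNIV. P i j * fS P \<beta> R S j) - \<beta> * fS P \<beta> R S i"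

definition nuS :: "('n::finite \<Rightarrow> 'n \<Rightarrow> real) \<Rightarrow> real \<Rightarrow> ('n \<Rightarrow> real) \<Rightarrow> 'n set \<Rightarrow> 'n \<Rightarrow> real" where
  "nuS P \<beta> R S i = rS P \<beta> R S i / wS P \<beta> S i"

end

theory Submission imports Defs begin

text \<open>
  Let \<open>V = f\<^sup>S - \<nu> g\<^sup>S\<close> (\<open>netS\<close> below), the value of \<open>\<tau>\<^sub>S\<close> for the reward \<open>R - \<nu>\<close>. It solves
  the Bellman equation of \<open>\<tau>\<^sub>S\<close>: one step of continuation inside \<open>S\<close>, value \<open>0\<close> outside.
  Inside \<open>S\<close> the bound \<open>\<nu> \<le> \<nu>\<^sub>j\<^sup>S = f\<^sub>j\<^sup>S / g\<^sub>j\<^sup>S\<close> is \<open>V j \<ge> 0\<close> (stopping at once is no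
  better), and outside \<open>S\<close> the bound \<open>\<nu>\<^sub>j\<^sup>S \<le> \<nu>\<close> says that one step of continuation followed
  by \<open>\<tau>\<^sub>S\<close> is no better than stopping. Together the bounds say exactly that \<open>V\<close> is a
  nonnegative supersolution of the optimality equation, and such a supersolution dominates the
  value of every randomized stopping rule. Conversely, optimality of \<open>\<tau>\<^sub>S\<close> against these two
  one-step deviations gives back the bounds.
\<close>

subsection \<open>Paths of the chain\<close>

lemma finite_paths: "finite (paths (i::'n::finite) t)"
proof (rule finite_subset)
  show "paths i t \<subseteq> {xs. set xs \<subseteq> UNIV \<and> length xs = Suc t}" by (auto simp: paths_def)
qed (rule finite_lists_length_eq, simp)

lemma paths_0 [simp]: "paths i 0 = {[i]}"
  by (auto simp: paths_def length_Suc_conv)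

lemma paths_nonempty: "xs \<in> paths i t \<Longrightarrow> xs \<noteq> []"
  by (auto simp: paths_def)

lemma paths_Suc_snoc: "paths i (Suc t) = (\<lambda>(xs, y). xs @ [y]) ` (paths i t \<times> UNIV)"
proof (intro equalityI subsetI)
  fix zs assume "zs \<in> paths i (Suc t)"
  then have len: "length zs = Suc (Suc t)" and "hd zs = i" by (auto simp: paths_def)
  then have "butlast zs \<in> paths i t"
    by (cases zs rule: rev_cases) (auto simp: paths_def hd_append split: if_splits)
  moreover have "zs = butlast zs @ [last zs]" using len by (cases zs rule: rev_cases) auto
  ultimately show "zs \<in> (\<lambda>(xs, y). xs @ [y]) ` (paths i t \<times> UNIV)" by force
qed (auto simp: paths_def hd_append)

lemma paths_Suc_Cons: "paths i (Suc t) = (\<lambda>(y, ys). i # ys) ` (SIGMA y:UNIV. paths y t)"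
proof (intro equalityI subsetI)
  fix zs assume "zs \<in> paths i (Suc t)"
  then obtain ys where "zs = i # ys" "length ys = Suc t"
    by (cases zs) (auto simp: paths_def)
  then show "zs \<in> (\<lambda>(y, ys). i # ys) ` (SIGMA y:UNIV. paths y t)"
    by (intro image_eqI[where x = "(hd ys, ys)"]) (auto simp: paths_def)
qed (auto simp: paths_def)

lemma sum_paths_Suc_snoc:
  "(\<Sum>zs\<in>paths (i::'n::finite) (Suc t). W zs) = (\<Sum>xs\<in>paths i t. \<Sum>y\<in>UNIV. W (xs @ [y]))"
proof -
  have "inj_on (\<lambda>(xs, y::'n). xs @ [y]) (paths i t \<times> UNIV)"
    by (auto simp: inj_on_def)
  then show ?thesis
    unfolding paths_Suc_snoc by (simp add: sum.reindex sum.cartesian_product split_def)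
qed

lemma sum_paths_Suc_Cons:
  "(\<Sum>zs\<in>paths (i::'n::finite) (Suc t). W zs) = (\<Sum>y\<in>UNIV. \<Sum>ys\<in>paths y t. W (i # ys))"
proof -
  have "inj_on (\<lambda>(y, ys). i # ys) (SIGMA y:(UNIV::'n set). paths y t)"
    by (auto simp: inj_on_def paths_def)
  then show ?thesis
    unfolding paths_Suc_Cons by (simp add: sum.reindex sum.Sigma finite_paths split_def)
qed

lemma path_prob_singleton [simp]: "path_prob P [i] = 1"
  by (simp add: path_prob_def)

lemma path_prob_Cons: "ys \<noteq> [] \<Longrightarrow> path_prob P (i # ys) = P i (hd ys) * path_prob P ys"
  by (cases ys) (simp_all add: path_prob_def prod.lessThan_Suc_shift del: prod.lessThan_Suc)

lemma path_prob_snoc: "xs \<noteq> [] \<Longrightarrow> path_prob P (xs @ [y]) = path_prob P xs * P (last xs) y"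
proof -
  assume "xs \<noteq> []"
  then obtain n where n: "length xs = Suc n" by (cases xs) auto
  have "(\<Prod>s<n. P ((xs @ [y]) ! s) ((xs @ [y]) ! Suc s)) = (\<Prod>s<n. P (xs ! s) (xs ! Suc s))"
    by (rule prod.cong) (auto simp: nth_append n)
  then show ?thesis
    using n \<open>xs \<noteq> []\<close> by (simp add: path_prob_def prod.lessThan_Suc nth_append last_conv_nth)
qed

lemma path_prob_nonneg: "stochastic P \<Longrightarrow> 0 \<le> path_prob P xs"
  unfolding path_prob_def stochastic_def by (auto intro!: prod_nonneg)

lemma sum_path_prob: "stochastic P \<Longrightarrow> (\<Sum>xs\<in>paths (i::'n::finite) t. path_prob P xs) = 1"
proof (induction t arbitrary: i)
  case (Suc t)
  have "(\<Sum>xs\<in>paths i (Suc t). path_prob P xs) = (\<Sum>y\<in>UNIV. P i y * (\<Sum>ys\<in>paths y t. path_prob P ys))"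
    unfolding sum_paths_Suc_Cons
    by (intro sum.cong refl) (auto simp: path_prob_Cons paths_nonempty sum_distrib_left paths_def)
  with Suc show ?case by (simp add: stochastic_def)
qed simp

lemma survive_singleton: "survive \<sigma> [i] = 1 - \<sigma> [i]"
  by (simp add: survive_def)

lemma survive_snoc: "survive \<sigma> (xs @ [y]) = survive \<sigma> xs * (1 - \<sigma> (xs @ [y]))"
  unfolding survive_def by (simp add: prod.lessThan_Suc)

lemma survive_Cons:
  assumes "\<And>zs. zs \<noteq> [] \<Longrightarrow> \<sigma> (i # zs) = \<sigma>' zs"
  shows "survive \<sigma> (i # ys) = (1 - \<sigma> [i]) * survive \<sigma>' ys"
proof -
  have "(\<Prod>s<length ys. 1 - \<sigma> (i # take (Suc s) ys)) = survive \<sigma>' ys"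
    unfolding survive_def using assms[of "take (Suc _) ys"] by (intro prod.cong refl) force
  then show ?thesis
    unfolding survive_def by (simp add: prod.lessThan_Suc_shift del: prod.lessThan_Suc)
qed

lemma survive_nonneg: "stopping_rule \<sigma> \<Longrightarrow> 0 \<le> survive \<sigma> xs"
  unfolding survive_def stopping_rule_def by (auto intro!: prod_nonneg)

lemma survive_le_1: "stopping_rule \<sigma> \<Longrightarrow> survive \<sigma> xs \<le> 1"
  unfolding survive_def stopping_rule_def by (auto intro!: prod_le_1)

subsection \<open>Discounted values of randomized stopping rules\<close>

definition disc_term :: "('n \<Rightarrow> 'n \<Rightarrow> real) \<Rightarrow> ('n \<Rightarrow> real) \<Rightarrow> ('n list \<Rightarrow> real) \<Rightarrow> 'n \<Rightarrow> nat \<Rightarrow> real"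
  where "disc_term P C \<sigma> i t = (\<Sum>xs\<in>paths i t. path_prob P xs * survive \<sigma> xs * C (last xs))"

lemma disc_val_eq_suminf: "disc_val P \<beta> C \<sigma> i = (\<Sum>t. \<beta> ^ t * disc_term P C \<sigma> i t)"
  by (simp add: disc_val_def disc_term_def)

lemma abs_disc_term_le:
  assumes P: "stochastic P" and \<sigma>: "stopping_rule \<sigma>"
  shows "\<bar>disc_term P C \<sigma> (i::'n::finite) t\<bar> \<le> (\<Sum>x\<in>UNIV. \<bar>C x\<bar>)"
proof -
  let ?M = "\<Sum>x\<in>UNIV. \<bar>C x\<bar>"
  have "\<bar>disc_term P C \<sigma> i t\<bar> \<le> (\<Sum>xs\<in>paths i t. \<bar>path_prob P xs * survive \<sigma> xs * C (last xs)\<bar>)"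
    unfolding disc_term_def by (rule sum_abs)
  also have "\<dots> \<le> (\<Sum>xs\<in>paths i t. path_prob P xs * ?M)"
  proof (rule sum_mono)
    fix xs
    have "survive \<sigma> xs * \<bar>C (last xs)\<bar> \<le> 1 * ?M"
      using survive_nonneg[OF \<sigma>] survive_le_1[OF \<sigma>]
      by (intro mult_mono member_le_sum) auto
    then show "\<bar>path_prob P xs * survive \<sigma> xs * C (last xs)\<bar> \<le> path_prob P xs * ?M"
      using path_prob_nonneg[OF P] survive_nonneg[OF \<sigma>]
      by (simp add: abs_mult mult.assoc mult_left_mono)
  qed
  also have "\<dots> = ?M" using sum_path_prob[OF P] by (simp add: sum_distrib_right[symmetric])
  finally show ?thesis .
qed

lemma summable_disc_term:
  assumes "stochastic P" "stopping_rule \<sigma>" "0 \<le> \<beta>" "\<beta> < 1"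
  shows "summable (\<lambda>t. \<beta> ^ t * disc_term P C \<sigma> (i::'n::finite) t)"
proof (rule summable_comparison_test')
  show "summable (\<lambda>t. (\<Sum>x\<in>UNIV. \<bar>C x\<bar>) * \<beta> ^ t)"
    using assms by (intro summable_mult summable_geometric) auto
  show "norm (\<beta> ^ t * disc_term P C \<sigma> i t) \<le> (\<Sum>x\<in>UNIV. \<bar>C x\<bar>) * \<beta> ^ t" for t
    using abs_disc_term_le[OF assms(1,2), of C i t] assms(3)
    by (simp add: abs_mult mult.commute mult_left_mono)
qed

lemma disc_term_0: "disc_term P C \<sigma> i 0 = (1 - \<sigma> [i]) * C i"
  by (simp add: disc_term_def survive_singleton)

text \<open>\<open>\<sigma>'\<close> is the rule \<open>\<sigma>\<close> shifted by one step, i.e. \<open>\<sigma>\<close> after having observed \<open>X(0) = i\<close>.\<close>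

lemma disc_term_Suc:
  assumes "\<And>zs. zs \<noteq> [] \<Longrightarrow> \<sigma> (i # zs) = \<sigma>' zs"
  shows "disc_term P C \<sigma> (i::'n::finite) (Suc t) = (1 - \<sigma> [i]) * (\<Sum>y\<in>UNIV. P i y * disc_term P C \<sigma>' y t)"
proof -
  have "disc_term P C \<sigma> i (Suc t)
      = (\<Sum>y\<in>UNIV. \<Sum>ys\<in>paths y t. path_prob P (i # ys) * survive \<sigma> (i # ys) * C (last (i # ys)))"
    unfolding disc_term_def by (rule sum_paths_Suc_Cons)
  also have "\<dots> = (\<Sum>y\<in>UNIV. (1 - \<sigma> [i]) * (P i y * disc_term P C \<sigma>' y t))"
    unfolding disc_term_def sum_distrib_left
    by (intro sum.cong refl)
       (auto simp: paths_def path_prob_Cons survive_Cons[where \<sigma>' = \<sigma>', OF assms])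
  finally show ?thesis by (simp add: sum_distrib_left)
qed

lemma disc_val_unfold:
  assumes P: "stochastic P" and \<sigma>': "stopping_rule \<sigma>'" and \<beta>: "0 \<le> \<beta>" "\<beta> < 1"
    and shift: "\<And>zs. zs \<noteq> [] \<Longrightarrow> \<sigma> (i # zs) = \<sigma>' zs"
  shows "disc_val P \<beta> C \<sigma> (i::'n::finite)
     = (1 - \<sigma> [i]) * (C i + \<beta> * (\<Sum>y\<in>UNIV. P i y * disc_val P \<beta> C \<sigma>' y))"
proof -
  let ?a = "\<lambda>t. \<beta> ^ t * disc_term P C \<sigma> i t"
  have a_Suc: "?a (Suc t) = \<beta> * (1 - \<sigma> [i]) * (\<Sum>y\<in>UNIV. P i y * (\<beta> ^ t * disc_term P C \<sigma>' y t))" for t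
    by (simp add: disc_term_Suc[where \<sigma>' = \<sigma>', OF shift] sum_distrib_left algebra_simps)
  have "(\<lambda>t. ?a (Suc t)) sums (\<beta> * (1 - \<sigma> [i]) * (\<Sum>y\<in>UNIV. P i y * disc_val P \<beta> C \<sigma>' y))"
    unfolding a_Suc disc_val_eq_suminf
    by (intro sums_sum sums_mult summable_sums summable_disc_term[OF P \<sigma>' \<beta>])
  then have "?a sums (\<beta> * (1 - \<sigma> [i]) * (\<Sum>y\<in>UNIV. P i y * disc_val P \<beta> C \<sigma>' y) + ?a 0)"
    by (subst sums_Suc_iff[symmetric])
  then show ?thesis
    unfolding disc_val_eq_suminf by (simp add: sums_iff disc_term_0 algebra_simps)
qed

lemma disc_val_diff:
  assumes "stochastic P" "stopping_rule \<sigma>" "0 \<le> \<beta>" "\<beta> < 1"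
  shows "disc_val P \<beta> (\<lambda>x. A x - c * B x) \<sigma> (i::'n::finite)
           = disc_val P \<beta> A \<sigma> i - c * disc_val P \<beta> B \<sigma> i"
proof -
  have "(\<lambda>t. \<beta> ^ t * disc_term P A \<sigma> i t - c * (\<beta> ^ t * disc_term P B \<sigma> i t))
          sums (disc_val P \<beta> A \<sigma> i - c * disc_val P \<beta> B \<sigma> i)"
    unfolding disc_val_eq_suminf
    by (intro sums_diff sums_mult summable_sums summable_disc_term[OF assms])
  then show ?thesis
    unfolding disc_val_eq_suminf
    by (simp add: sums_iff disc_term_def sum_subtractf sum_distrib_left algebra_simps)
qed

lemma disc_val_nonneg:
  assumes P: "stochastic P" and \<sigma>: "stopping_rule \<sigma>" and \<beta>: "0 \<le> \<beta>" "\<beta> < 1"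
    and "\<And>x. 0 \<le> C x"
  shows "0 \<le> disc_val P \<beta> C \<sigma> (i::'n::finite)"
  unfolding disc_val_eq_suminf disc_term_def using assms
  by (intro suminf_nonneg summable_disc_term[OF P \<sigma> \<beta>, unfolded disc_term_def])
     (auto intro!: sum_nonneg mult_nonneg_nonneg path_prob_nonneg survive_nonneg)

subsection \<open>Supersolutions dominate all stopping rules\<close>

text \<open>\<open>E\<^sub>i[V(X(t)); \<tau> \<ge> t]\<close>: the rule may have stopped at \<open>t\<close> itself, hence \<open>butlast\<close>.\<close>

definition pending_value :: "('n \<Rightarrow> 'n \<Rightarrow> real) \<Rightarrow> ('n list \<Rightarrow> real) \<Rightarrow> ('n \<Rightarrow> real) \<Rightarrow> 'n \<Rightarrow> nat \<Rightarrow> real"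
  where "pending_value P \<sigma> V i t = (\<Sum>xs\<in>paths i t. path_prob P xs * survive \<sigma> (butlast xs) * V (last xs))"

lemma pending_value_0: "pending_value P \<sigma> V i 0 = V i"
  by (simp add: pending_value_def survive_def)

lemma pending_value_nonneg:
  "stochastic P \<Longrightarrow> stopping_rule \<sigma> \<Longrightarrow> (\<And>x. 0 \<le> V x) \<Longrightarrow> 0 \<le> pending_value P \<sigma> V i t"
  unfolding pending_value_def
  by (intro sum_nonneg mult_nonneg_nonneg path_prob_nonneg survive_nonneg)

lemma pending_value_Suc:
  "pending_value P \<sigma> V (i::'n::finite) (Suc t)
     = (\<Sum>xs\<in>paths i t. path_prob P xs * survive \<sigma> xs * (\<Sum>y\<in>UNIV. P (last xs) y * V y))"
  unfolding pending_value_def sum_paths_Suc_snoc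
  by (intro sum.cong refl) (auto simp: path_prob_snoc paths_nonempty sum_distrib_left algebra_simps)

lemma disc_term_plus_pending_value_le:
  assumes P: "stochastic P" and \<sigma>: "stopping_rule \<sigma>"
    and V_nonneg: "\<And>x. 0 \<le> V x"
    and super: "\<And>x. C x + \<beta> * (\<Sum>y\<in>UNIV. P x y * V y) \<le> V x"
  shows "disc_term P C \<sigma> (i::'n::finite) t + \<beta> * pending_value P \<sigma> V i (Suc t) \<le> pending_value P \<sigma> V i t"
proof -
  have "disc_term P C \<sigma> i t + \<beta> * pending_value P \<sigma> V i (Suc t)
      = (\<Sum>xs\<in>paths i t. path_prob P xs * (survive \<sigma> xs
           * (C (last xs) + \<beta> * (\<Sum>y\<in>UNIV. P (last xs) y * V y))))"
    unfolding pending_value_Suc disc_term_def sum_distrib_left sum.distrib[symmetric]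
    by (intro sum.cong refl) (simp add: distrib_left sum_distrib_left mult_ac)
  also have "\<dots> \<le> pending_value P \<sigma> V i t"
    unfolding pending_value_def
  proof (intro sum_mono)
    fix xs assume "xs \<in> paths i t"
    then have split: "survive \<sigma> xs = survive \<sigma> (butlast xs) * (1 - \<sigma> xs)"
      using survive_snoc[of \<sigma> "butlast xs" "last xs"] paths_nonempty by force
    have "0 \<le> 1 - \<sigma> xs" "1 - \<sigma> xs \<le> 1"
      using \<sigma> unfolding stopping_rule_def by auto
    then have "(1 - \<sigma> xs) * (C (last xs) + \<beta> * (\<Sum>y\<in>UNIV. P (last xs) y * V y)) \<le> V (last xs)"
      using super[of "last xs"] V_nonneg[of "last xs"]
      by (meson mult_left_le_one_le mult_left_mono order_trans)
    then show "path_prob P xs * (survive \<sigma> xs * (C (last xs) + \<beta> * (\<Sum>y\<in>UNIV. P (last xs) y * V y)))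
        \<le> path_prob P xs * survive \<sigma> (butlast xs) * V (last xs)"
      unfolding split mult.assoc
      by (intro mult_left_mono path_prob_nonneg[OF P] survive_nonneg[OF \<sigma>]) simp_all
  qed
  finally show ?thesis .
qed

lemma disc_val_le_supersolution:
  assumes P: "stochastic P" and \<sigma>: "stopping_rule \<sigma>" and \<beta>: "0 \<le> \<beta>" "\<beta> < 1"
    and V_nonneg: "\<And>x. 0 \<le> V x"
    and super: "\<And>x. C x + \<beta> * (\<Sum>y\<in>UNIV. P x y * V y) \<le> V x"
  shows "disc_val P \<beta> C \<sigma> (i::'n::finite) \<le> V i"
proof -
  have partial: "(\<Sum>t<T. \<beta> ^ t * disc_term P C \<sigma> i t) + \<beta> ^ T * pending_value P \<sigma> V i T \<le> V i" for T
  proof (induction T)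
    case 0
    then show ?case by (simp add: pending_value_0)
  next
    case (Suc T)
    have "\<beta> ^ T * (disc_term P C \<sigma> i T + \<beta> * pending_value P \<sigma> V i (Suc T))
            \<le> \<beta> ^ T * pending_value P \<sigma> V i T"
      using \<beta> by (intro mult_left_mono disc_term_plus_pending_value_le[OF P \<sigma> V_nonneg super]) simp
    with Suc show ?case by (simp add: algebra_simps)
  qed
  have "(\<Sum>t. \<beta> ^ t * disc_term P C \<sigma> i t) \<le> V i"
  proof (rule suminf_le_const[OF summable_disc_term[OF P \<sigma> \<beta>]])
    fix T
    have "0 \<le> \<beta> ^ T * pending_value P \<sigma> V i T"
      using \<beta> by (intro mult_nonneg_nonneg zero_le_power pending_value_nonneg[OF P \<sigma> V_nonneg])
    with partial[of T] show "(\<Sum>t<T. \<beta> ^ t * disc_term P C \<sigma> i t) \<le> V i" by linarith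
  qed
  then show ?thesis by (simp add: disc_val_eq_suminf)
qed

subsection \<open>The rule \<open>\<tau>\<^sub>S\<close> and its one-step deviations\<close>

definition delayed_tauS :: "'n set \<Rightarrow> 'n list \<Rightarrow> real"
  where "delayed_tauS S h = (if length h \<le> 1 then 0 else tauS S h)"

lemma stopping_rule_tauS: "stopping_rule (tauS S)"
  by (simp add: stopping_rule_def tauS_def)

lemma stopping_rule_delayed_tauS: "stopping_rule (delayed_tauS S)"
  by (simp add: stopping_rule_def delayed_tauS_def tauS_def)

lemma stopping_rule_stop_now: "stopping_rule (\<lambda>_. 1)"
  by (simp add: stopping_rule_def)

context
  fixes P :: "'n::finite \<Rightarrow> 'n \<Rightarrow> real" and \<beta> :: real
  assumes P: "stochastic P" and \<beta>: "0 \<le> \<beta>" "\<beta> < 1"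
begin

lemma disc_val_tauS:
  "disc_val P \<beta> C (tauS S) x
     = (if x \<in> S then C x + \<beta> * (\<Sum>y\<in>UNIV. P x y * disc_val P \<beta> C (tauS S) y) else 0)"
  by (subst disc_val_unfold[OF P stopping_rule_tauS[of S] \<beta>, where \<sigma> = "tauS S"])
     (simp_all add: tauS_def)

lemma disc_val_delayed_tauS:
  "disc_val P \<beta> C (delayed_tauS S) x = C x + \<beta> * (\<Sum>y\<in>UNIV. P x y * disc_val P \<beta> C (tauS S) y)"
  by (subst disc_val_unfold[OF P stopping_rule_tauS[of S] \<beta>, where \<sigma> = "delayed_tauS S"])
     (auto simp: delayed_tauS_def tauS_def neq_Nil_conv)

lemma disc_val_stop_now: "disc_val P \<beta> C (\<lambda>_. 1) x = 0"
  by (subst disc_val_unfold[OF P stopping_rule_stop_now \<beta>]) simp_all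

lemma fS_eq: "fS P \<beta> R S x = (if x \<in> S then R x + \<beta> * (\<Sum>y\<in>UNIV. P x y * fS P \<beta> R S y) else 0)"
  unfolding fS_def fval_def by (rule disc_val_tauS)

lemma gS_eq: "gS P \<beta> S x = (if x \<in> S then 1 + \<beta> * (\<Sum>y\<in>UNIV. P x y * gS P \<beta> S y) else 0)"
  unfolding gS_def gval_def by (rule disc_val_tauS)

lemma sum_P_gS_nonneg: "0 \<le> (\<Sum>y\<in>UNIV. P x y * gS P \<beta> S y)"
  using P unfolding gS_def gval_def stochastic_def
  by (intro sum_nonneg mult_nonneg_nonneg disc_val_nonneg[OF P stopping_rule_tauS \<beta>]) auto

lemma gS_ge_1: "x \<in> S \<Longrightarrow> 1 \<le> gS P \<beta> S x"
  using gS_eq[of S x] sum_P_gS_nonneg[of x S] \<beta> by simp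

lemma nuS_in_S: "x \<in> S \<Longrightarrow> nuS P \<beta> R S x = fS P \<beta> R S x / gS P \<beta> S x"
proof -
  assume "x \<in> S"
  then have "rS P \<beta> R S x = (1 - \<beta>) * fS P \<beta> R S x" and "wS P \<beta> S x = (1 - \<beta>) * gS P \<beta> S x"
    using fS_eq[of R S x] gS_eq[of S x] by (simp_all add: rS_def wS_def algebra_simps)
  then show ?thesis using \<beta> by (simp add: nuS_def)
qed

lemma fval_minus_gval:
  "stopping_rule \<sigma> \<Longrightarrow> fval P \<beta> R \<sigma> x - \<nu> * gval P \<beta> \<sigma> x = disc_val P \<beta> (\<lambda>y. R y - \<nu>) \<sigma> x"
  using disc_val_diff[OF P _ \<beta>, of \<sigma> R \<nu> "\<lambda>_. 1"] by (simp add: fval_def gval_def)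

definition netS :: "('n \<Rightarrow> real) \<Rightarrow> 'n set \<Rightarrow> real \<Rightarrow> 'n \<Rightarrow> real"
  where "netS R S \<nu> x = fS P \<beta> R S x - \<nu> * gS P \<beta> S x"

lemma disc_val_tauS_eq_netS: "disc_val P \<beta> (\<lambda>y. R y - \<nu>) (tauS S) x = netS R S \<nu> x"
  using fval_minus_gval[OF stopping_rule_tauS] by (simp add: netS_def fS_def gS_def)

lemma sum_P_netS:
  "(\<Sum>y\<in>UNIV. P x y * netS R S \<nu> y)
     = (\<Sum>y\<in>UNIV. P x y * fS P \<beta> R S y) - \<nu> * (\<Sum>y\<in>UNIV. P x y * gS P \<beta> S y)"
  by (simp add: netS_def sum_subtractf sum_distrib_left algebra_simps)

lemma netS_eq:
  "netS R S \<nu> x = (if x \<in> S then R x - \<nu> + \<beta> * (\<Sum>y\<in>UNIV. P x y * netS R S \<nu> y) else 0)"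
  unfolding sum_P_netS using fS_eq[of R S x] gS_eq[of S x] by (simp add: netS_def algebra_simps)

lemma index_bound_in_S: "x \<in> S \<Longrightarrow> \<nu> \<le> nuS P \<beta> R S x \<longleftrightarrow> 0 \<le> netS R S \<nu> x"
  using gS_ge_1[of x S] by (simp add: nuS_in_S netS_def pos_le_divide_eq)

lemma index_bound_outside_S:
  assumes "x \<notin> S"
  shows "nuS P \<beta> R S x \<le> \<nu> \<longleftrightarrow> R x - \<nu> + \<beta> * (\<Sum>y\<in>UNIV. P x y * netS R S \<nu> y) \<le> 0"
proof -
  have w: "wS P \<beta> S x = 1 + \<beta> * (\<Sum>y\<in>UNIV. P x y * gS P \<beta> S y)"
    and r: "rS P \<beta> R S x = R x + \<beta> * (\<Sum>y\<in>UNIV. P x y * fS P \<beta> R S y)"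
    using assms gS_eq[of S x] fS_eq[of R S x] by (simp_all add: wS_def rS_def)
  have "0 < wS P \<beta> S x"
    unfolding w using sum_P_gS_nonneg[of x S] \<beta> by (simp add: add_pos_nonneg)
  then show ?thesis
    by (simp add: nuS_def pos_divide_le_eq w r sum_P_netS algebra_simps)
qed

lemma index_bounds_iff_supersolution:
  "((\<forall>j\<in>-S. nuS P \<beta> R S j \<le> \<nu>) \<and> (\<forall>j\<in>S. \<nu> \<le> nuS P \<beta> R S j))
     \<longleftrightarrow> (\<forall>x. 0 \<le> netS R S \<nu> x \<and> R x - \<nu> + \<beta> * (\<Sum>y\<in>UNIV. P x y * netS R S \<nu> y) \<le> netS R S \<nu> x)"
proof -
  have "(if x \<in> S then \<nu> \<le> nuS P \<beta> R S x else nuS P \<beta> R S x \<le> \<nu>)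
      \<longleftrightarrow> 0 \<le> netS R S \<nu> x \<and> R x - \<nu> + \<beta> * (\<Sum>y\<in>UNIV. P x y * netS R S \<nu> y) \<le> netS R S \<nu> x" for x
    using index_bound_in_S[of x S \<nu> R] index_bound_outside_S[of x S R \<nu>] netS_eq[of R S \<nu> x]
    by (cases "x \<in> S") simp_all
  then show ?thesis by (metis ComplD ComplI)
qed

lemma tauS_optimal_iff_supersolution:
  "(\<forall>i \<sigma>. stopping_rule \<sigma> \<longrightarrow> disc_val P \<beta> (\<lambda>y. R y - \<nu>) \<sigma> i \<le> netS R S \<nu> i)
     \<longleftrightarrow> (\<forall>x. 0 \<le> netS R S \<nu> x \<and> R x - \<nu> + \<beta> * (\<Sum>y\<in>UNIV. P x y * netS R S \<nu> y) \<le> netS R S \<nu> x)"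
proof
  assume opt: "\<forall>i \<sigma>. stopping_rule \<sigma> \<longrightarrow> disc_val P \<beta> (\<lambda>y. R y - \<nu>) \<sigma> i \<le> netS R S \<nu> i"
  show "\<forall>x. 0 \<le> netS R S \<nu> x \<and> R x - \<nu> + \<beta> * (\<Sum>y\<in>UNIV. P x y * netS R S \<nu> y) \<le> netS R S \<nu> x"
  proof
    fix x
    show "0 \<le> netS R S \<nu> x \<and> R x - \<nu> + \<beta> * (\<Sum>y\<in>UNIV. P x y * netS R S \<nu> y) \<le> netS R S \<nu> x"
      using opt[rule_format, OF stopping_rule_stop_now, of x]
        opt[rule_format, OF stopping_rule_delayed_tauS[of S], of x]
      by (simp add: disc_val_stop_now disc_val_delayed_tauS disc_val_tauS_eq_netS)
  qed
next
  assume super: "\<forall>x. 0 \<le> netS R S \<nu> x \<and> R x - \<nu> + \<beta> * (\<Sum>y\<in>UNIV. P x y * netS R S \<nu> y) \<le> netS R S \<nu> x"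
  show "\<forall>i \<sigma>. stopping_rule \<sigma> \<longrightarrow> disc_val P \<beta> (\<lambda>y. R y - \<nu>) \<sigma> i \<le> netS R S \<nu> i"
  proof (intro allI impI)
    fix i and \<sigma> :: "'n list \<Rightarrow> real" assume "stopping_rule \<sigma>"
    from disc_val_le_supersolution[OF P this \<beta>] super
    show "disc_val P \<beta> (\<lambda>y. R y - \<nu>) \<sigma> i \<le> netS R S \<nu> i" by simp
  qed
qed

end

theorem proposition4:
  fixes P :: "'n::finite \<Rightarrow> 'n \<Rightarrow> real" and \<beta> :: real and R :: "'n \<Rightarrow> real"
    and S :: "'n set" and \<nu> :: real
  assumes "stochastic P" and "0 < \<beta>" and "\<beta> < 1"
  shows "(\<forall>i. \<forall>\<sigma>. stopping_rule \<sigma> \<longrightarrow>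
            fval P \<beta> R \<sigma> i - \<nu> * gval P \<beta> \<sigma> i
              \<le> fval P \<beta> R (tauS S) i - \<nu> * gval P \<beta> (tauS S) i)
         \<longleftrightarrow> ((\<forall>j\<in>-S. nuS P \<beta> R S j \<le> \<nu>) \<and> (\<forall>j\<in>S. \<nu> \<le> nuS P \<beta> R S j))"
proof -
  have P: "stochastic P" and \<beta>: "0 \<le> \<beta>" "\<beta> < 1" using assms by auto
  have "(\<forall>i. \<forall>\<sigma>. stopping_rule \<sigma> \<longrightarrow>
            fval P \<beta> R \<sigma> i - \<nu> * gval P \<beta> \<sigma> i
              \<le> fval P \<beta> R (tauS S) i - \<nu> * gval P \<beta> (tauS S) i)
      \<longleftrightarrow> (\<forall>i \<sigma>. stopping_rule \<sigma> \<longrightarrow> disc_val P \<beta> (\<lambda>y. R y - \<nu>) \<sigma> i \<le> netS P \<beta> R S \<nu> i)"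
    by (simp add: fval_minus_gval[OF P \<beta>] stopping_rule_tauS disc_val_tauS_eq_netS[OF P \<beta>])
  also have "\<dots> \<longleftrightarrow> (\<forall>x. 0 \<le> netS P \<beta> R S \<nu> x
                     \<and> R x - \<nu> + \<beta> * (\<Sum>y\<in>UNIV. P x y * netS P \<beta> R S \<nu> y) \<le> netS P \<beta> R S \<nu> x)"
    by (rule tauS_optimal_iff_supersolution[OF P \<beta>])
  also have "\<dots> \<longleftrightarrow> (\<forall>j\<in>-S. nuS P \<beta> R S j \<le> \<nu>) \<and> (\<forall>j\<in>S. \<nu> \<le> nuS P \<beta> R S j)"
    by (rule index_bounds_iff_supersolution[OF P \<beta>, symmetric])
  finally show ?thesis .
qed

end
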